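(* Let $G$ be a (weighted) graph that is not a multigraph and is $2$-connected, and let $s, d$ be a source-destination pair. Suppose a forwarding subgraph (FS) uses the shortest path $P(s,d)$ between $s$ and $d$ as the primary path and can avoid any single link failure along the primary path. Then the FS has at least $2|P(s,d)| + 1$ edges, where $|P(s,d)|$ is the number of edges of $P(s,d)$. Moreover, there exist graphs for which this bound is tight.
   Context: A forwarding subgraph (FS) is a directed acyclic subgraph of the network graph specifying the paths a packet may take from source $s$ to destination $d$. It contains a designated primary path from $s$ to $d$. "Avoiding any single link failure along the primary path" means that for every node $v_i$ on the primary path, the FS contains an alternate path from $v_i$ to $d$ that does not use $v_i$'s outgoing primary-path link. Throughout, the graph is assumed not to be a multigraph and to be $2$-connected. *)

theory Defs
  imports Complex_Main
begin

text \<open>Undirected simple graphs: vertex set V, edges are 2-element subsets of V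
  (so no loops and, being a set of sets, no parallel edges, i.e. not a multigraph).\<close>
definition simple_graph :: "'a set \<Rightarrow> 'a set set \<Rightarrow> bool" where
  "simple_graph V E \<longleftrightarrow> finite V \<and> (\<forall>e\<in>E. e \<subseteq> V \<and> card e = 2)"

definition arcs_of :: "'a list \<Rightarrow> ('a \<times> 'a) set" where
  "arcs_of xs = set (zip xs (tl xs))"

definition upath :: "'a set \<Rightarrow> 'a set set \<Rightarrow> 'a list \<Rightarrow> bool" where
  "upath V E p \<longleftrightarrow> p \<noteq> [] \<and> distinct p \<and> set p \<subseteq> V \<and>
     (\<forall>(u,v)\<in>arcs_of p. {u,v} \<in> E)"

definition connected_graph :: "'a set \<Rightarrow> 'a set set \<Rightarrow> bool" where
  "connected_graph V E \<longleftrightarrow>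
     (\<forall>u\<in>V. \<forall>v\<in>V. \<exists>p. upath V E p \<and> hd p = u \<and> last p = v)"

definition two_connected :: "'a set \<Rightarrow> 'a set set \<Rightarrow> bool" where
  "two_connected V E \<longleftrightarrow> card V \<ge> 3 \<and> connected_graph V E \<and>
     (\<forall>x\<in>V. connected_graph (V - {x}) {e\<in>E. x \<notin> e})"

definition path_weight :: "('a set \<Rightarrow> real) \<Rightarrow> 'a list \<Rightarrow> real" where
  "path_weight w p = sum_list (map (\<lambda>(u,v). w {u,v}) (zip p (tl p)))"

definition path_len :: "'a list \<Rightarrow> nat" where
  "path_len p = length p - 1"

definition shortest_path ::
  "'a set \<Rightarrow> 'a set set \<Rightarrow> ('a set \<Rightarrow> real) \<Rightarrow> 'a \<Rightarrow> 'a \<Rightarrow> 'a list \<Rightarrow> bool" where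
  "shortest_path V E w s d p \<longleftrightarrow> upath V E p \<and> hd p = s \<and> last p = d \<and>
     (\<forall>q. upath V E q \<and> hd q = s \<and> last q = d \<longrightarrow> path_weight w p \<le> path_weight w q)"

definition dwalk :: "('a \<times> 'a) set \<Rightarrow> 'a list \<Rightarrow> 'a \<Rightarrow> 'a \<Rightarrow> bool" where
  "dwalk F q u v \<longleftrightarrow> q \<noteq> [] \<and> hd q = u \<and> last q = v \<and> arcs_of q \<subseteq> F"

definition forwarding_subgraph ::
  "'a set \<Rightarrow> 'a set set \<Rightarrow> 'a \<Rightarrow> 'a \<Rightarrow> 'a list \<Rightarrow> ('a \<times> 'a) set \<Rightarrow> bool" where
  "forwarding_subgraph V E s d P F \<longleftrightarrow>
     (\<forall>(u,v)\<in>F. {u,v} \<in> E) \<and> acyclic F \<and>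
     upath V E P \<and> hd P = s \<and> last P = d \<and> arcs_of P \<subseteq> F"

definition avoids_single_link_failures ::
  "'a \<Rightarrow> 'a list \<Rightarrow> ('a \<times> 'a) set \<Rightarrow> bool" where
  "avoids_single_link_failures d P F \<longleftrightarrow>
     (\<forall>i < length P - 1. \<exists>q. dwalk F q (P!i) d \<and> (P!i, P!(i+1)) \<notin> arcs_of q)"

end

theory Submission
  imports Defs
begin

text \<open>Let the primary path be \<open>v\<^sub>0 \<dots> v\<^sub>n\<close> with \<open>v\<^sub>n = d\<close>. Besides the \<open>n\<close> primary arcs,
  every \<open>v\<^sub>i\<close> (\<open>i < n\<close>) needs a second outgoing arc to start its alternate path, giving \<open>n\<close>
  further arcs with pairwise distinct tails. The alternate arc of \<open>v\<^bsub>n-1\<^esub>\<close> cannot end on the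
  primary path: it would close a cycle or duplicate the primary arc. So its head is a vertex
  \<open>x \<noteq> d\<close> off the path, whose own outgoing arc is a \<open>(2n+1)\<close>-st arc. The bound is attained
  in the complete graph on \<open>0, \<dots>, n+1\<close> with weights \<open>|u - v|\<close>: the path \<open>0 \<dots> n\<close> is
  shortest, each \<open>i < n\<close> detours via \<open>n+1\<close>, and \<open>n+1\<close> forwards to \<open>n\<close>.\<close>

lemma arcs_of_Cons_Cons: "arcs_of (u # v # vs) = insert (u, v) (arcs_of (v # vs))"
  by (simp add: arcs_of_def)

lemma arcs_of_singleton [simp]: "arcs_of [u] = {}"
  by (simp add: arcs_of_def)

lemma nth_arc_in_arcs_of:
  assumes "Suc i < length P"
  shows "(P ! i, P ! Suc i) \<in> arcs_of P"
proof -
  have "zip P (tl P) ! i = (P ! i, P ! Suc i)" "i < length (zip P (tl P))"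
    using assms by (simp_all add: nth_tl)
  then show ?thesis unfolding arcs_of_def by (metis nth_mem)
qed

lemma arcs_of_upt: "arcs_of [0..<Suc k] = (\<lambda>i. (i, Suc i)) ` {..<k}"
proof -
  have "zip [0..<Suc k] [Suc 0..<Suc k] = map (\<lambda>i. (i, Suc i)) [0..<k]"
    by (rule nth_equalityI) (simp_all del: upt_Suc)
  then show ?thesis
    by (simp del: upt_Suc add: arcs_of_def upt_conv_Cons atLeast0LessThan)
qed

lemma arcs_of_nth_rtrancl:
  assumes "arcs_of P \<subseteq> F" "j \<le> l" "l < length P"
  shows "(P ! j, P ! l) \<in> F\<^sup>*"
  using assms(2,3)
proof (induction l)
  case (Suc l)
  show ?case
  proof (cases "j = Suc l")
    case False
    then have "(P ! j, P ! l) \<in> F\<^sup>*" using Suc by simp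
    moreover have "(P ! l, P ! Suc l) \<in> F" using nth_arc_in_arcs_of Suc.prems assms(1) by blast
    ultimately show ?thesis by (rule rtrancl_into_rtrancl)
  qed simp
qed simp

lemma acyclic_arc_on_path_forward:
  assumes "acyclic F" "arcs_of P \<subseteq> F" "(P ! i, P ! j) \<in> F" "i < length P"
  shows "i < j"
proof (rule ccontr)
  assume "\<not> i < j"
  then have "(P ! j, P ! i) \<in> F\<^sup>*" by (intro arcs_of_nth_rtrancl[OF assms(2)]) (use assms(4) in auto)
  then have "(P ! i, P ! i) \<in> F\<^sup>+" by (rule rtrancl_into_trancl2[OF assms(3)])
  then show False using assms(1) unfolding acyclic_def by blast
qed

lemma acyclic_if_rank_increasing:
  fixes r :: "'a \<Rightarrow> nat"
  assumes "\<And>x y. (x, y) \<in> F \<Longrightarrow> r x < r y"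
  shows "acyclic F"
proof -
  have "r x < r y" if "(x, y) \<in> F\<^sup>+" for x y
    using that by (induction rule: trancl_induct) (auto dest: assms)
  then show ?thesis unfolding acyclic_def by blast
qed

lemma dwalk_first_arc:
  assumes "dwalk F q u v" "u \<noteq> v"
  obtains y r where "q = u # y # r" "(u, y) \<in> F" "dwalk F (y # r) y v"
proof -
  obtain q' where "q = u # q'" using assms(1) unfolding dwalk_def by (cases q) auto
  with assms obtain y r where q: "q = u # y # r" unfolding dwalk_def by (cases q') auto
  with assms(1) have "(u, y) \<in> F" "dwalk F (y # r) y v"
    unfolding dwalk_def by (auto simp: arcs_of_Cons_Cons)
  with q show thesis by (rule that)
qed

lemma avoids_single_link_failures_detour:
  assumes "avoids_single_link_failures d P F" "distinct P" "last P = d" "Suc i < length P"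
  obtains y r where "(P ! i, y) \<in> F" "y \<noteq> P ! Suc i" "dwalk F (y # r) y d"
proof -
  have "i < length P - 1" using assms(4) by simp
  then obtain q where q: "dwalk F q (P ! i) d" "(P ! i, P ! Suc i) \<notin> arcs_of q"
    using assms(1) unfolding avoids_single_link_failures_def by auto
  have "P \<noteq> []" using assms(4) by auto
  then have "d = P ! (length P - 1)" using assms(3) last_conv_nth[of P] by simp
  moreover have "P ! i \<noteq> P ! (length P - 1)"
    using assms(2,4) by (simp add: nth_eq_iff_index_eq)
  ultimately obtain y r where "q = P ! i # y # r" "(P ! i, y) \<in> F" "dwalk F (y # r) y d"
    using dwalk_first_arc[OF q(1)] by metis
  moreover from this(1) q(2) have "y \<noteq> P ! Suc i" by (auto simp: arcs_of_Cons_Cons)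
  ultimately show thesis using that by blast
qed

lemma finite_arcs_of_simple_graph:
  assumes "simple_graph V E" "\<forall>(u, v) \<in> F. {u, v} \<in> E"
  shows "finite F"
proof (rule finite_subset)
  show "F \<subseteq> V \<times> V" using assms unfolding simple_graph_def by fastforce
  show "finite (V \<times> V)" using assms(1) unfolding simple_graph_def by simp
qed

lemma arc_off_path_if_avoids_single_link_failures:
  assumes "acyclic F" "distinct P" "arcs_of P \<subseteq> F" "2 \<le> length P"
    "last P = d" "avoids_single_link_failures d P F"
  obtains x z where "(x, z) \<in> F" "x \<notin> set P"
proof -
  define n where "n = length P - 1"
  have len: "length P = Suc n" and n: "0 < n" using assms(4) by (auto simp: n_def)
  obtain x r where x: "(P ! (n - 1), x) \<in> F" "x \<noteq> P ! n" "dwalk F (x # r) x d"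
    using avoids_single_link_failures_detour[OF assms(6,2,5), of "n - 1"] len n by auto
  have x_off_path: "x \<notin> set P"
  proof
    assume "x \<in> set P"
    then obtain j where j: "j < length P" "x = P ! j" by (metis in_set_conv_nth)
    then have "n - 1 < j"
      using acyclic_arc_on_path_forward[OF assms(1,3)] x(1) len by simp
    then have "j = n" using j(1) len n by simp
    then show False using j(2) x(2) by simp
  qed
  moreover have "x \<noteq> d" using calculation assms(5) len last_in_set[of P] by force
  ultimately show thesis using dwalk_first_arc[OF x(3)] that by metis
qed

lemma card_ge_if_avoids_single_link_failures:
  assumes "finite F" "acyclic F" "distinct P" "arcs_of P \<subseteq> F" "2 \<le> length P"
    "last P = d" "avoids_single_link_failures d P F"
  shows "2 * path_len P + 1 \<le> card F"
proof -
  define n where "n = path_len P"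
  have len: "length P = Suc n" using assms(5) by (auto simp: n_def path_len_def)
  have "\<exists>y. (P ! i, y) \<in> F \<and> y \<noteq> P ! Suc i" if "i < n" for i
    using avoids_single_link_failures_detour[OF assms(7,3,6), of i] that len by auto
  then obtain b where b: "\<And>i. i < n \<Longrightarrow> (P ! i, b i) \<in> F \<and> b i \<noteq> P ! Suc i"
    by metis
  obtain x z where xz: "(x, z) \<in> F" "x \<notin> set P"
    using arc_off_path_if_avoids_single_link_failures[OF assms(2-7)] .
  define primary where "primary = (\<lambda>i. (P ! i, P ! Suc i)) ` {..<n}"
  define detours where "detours = (\<lambda>i. (P ! i, b i)) ` {..<n}"
  have inj: "inj_on (\<lambda>i. P ! i) {..<n}"
    using assms(3) len by (auto simp: inj_on_def nth_eq_iff_index_eq)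
  have "card primary = n" unfolding primary_def
    by (subst card_image) (auto simp: inj_on_def dest: inj_onD[OF inj])
  moreover have "card detours = n" unfolding detours_def
    by (subst card_image) (auto simp: inj_on_def dest: inj_onD[OF inj])
  moreover have "primary \<inter> detours = {}"
    unfolding primary_def detours_def using b inj_onD[OF inj] by fastforce
  moreover have "(x, z) \<notin> primary \<union> detours"
    unfolding primary_def detours_def using xz(2) len by auto
  moreover have "finite primary" "finite detours" unfolding primary_def detours_def by simp_all
  ultimately have "card (insert (x, z) (primary \<union> detours)) = 2 * n + 1"
    by (simp add: card_Un_disjoint)
  moreover have "insert (x, z) (primary \<union> detours) \<subseteq> F"
    unfolding primary_def detours_def
    using b xz(1) assms(4) nth_arc_in_arcs_of[of _ P] len by fastforce
  ultimately show ?thesis unfolding n_def by (metis assms(1) card_mono)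
qed

lemma connected_graph_if_complete:
  assumes "\<And>u v. u \<in> V \<Longrightarrow> v \<in> V \<Longrightarrow> u \<noteq> v \<Longrightarrow> {u, v} \<in> E"
  shows "connected_graph V E"
  unfolding connected_graph_def
proof (intro ballI)
  fix u v assume uv: "u \<in> V" "v \<in> V"
  show "\<exists>p. upath V E p \<and> hd p = u \<and> last p = v"
  proof (cases "u = v")
    case True then show ?thesis using uv
      by (intro exI[of _ "[u]"]) (auto simp: upath_def)
  next
    case False then show ?thesis using uv assms
      by (intro exI[of _ "[u, v]"]) (auto simp: upath_def arcs_of_def)
  qed
qed

lemma two_connected_complete_graph:
  assumes "3 \<le> card V"
  shows "two_connected V {e. e \<subseteq> V \<and> card e = 2}"
  unfolding two_connected_def
proof (intro conjI ballI)
  show "connected_graph V {e. e \<subseteq> V \<and> card e = 2}"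
    by (rule connected_graph_if_complete) (auto simp: card_insert_if)
  show "connected_graph (V - {x}) {e \<in> {e. e \<subseteq> V \<and> card e = 2}. x \<notin> e}" for x
    by (rule connected_graph_if_complete) (auto simp: card_insert_if)
qed (fact assms)

lemma path_weight_Cons_Cons: "path_weight w (u # v # vs) = w {u, v} + path_weight w (v # vs)"
  by (simp add: path_weight_def)

lemma path_weight_ge_potential_difference:
  assumes "\<And>u v. f v - f u \<le> w {u, v}" "p \<noteq> []"
  shows "f (last p) - f (hd p) \<le> path_weight w p"
  using assms(2)
proof (induction p rule: induct_list012)
  case (3 u v vs)
  have "f (last (v # vs)) - f v \<le> path_weight w (v # vs)" using "3" by simp
  moreover have "f v - f u \<le> w {u, v}" by (rule assms(1))
  ultimately show ?case by (simp add: path_weight_Cons_Cons)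
qed (simp_all add: path_weight_def)

lemma path_weight_eq_potential_difference:
  assumes "\<forall>(u, v) \<in> arcs_of p. w {u, v} = f v - f u" "p \<noteq> []"
  shows "path_weight w p = f (last p) - f (hd p)"
  using assms
proof (induction p rule: induct_list012)
  case (3 u v vs)
  then have "path_weight w (v # vs) = f (last (v # vs)) - f v" "w {u, v} = f v - f u"
    by (simp_all add: arcs_of_Cons_Cons)
  then show ?case by (simp add: path_weight_Cons_Cons)
qed (simp_all add: path_weight_def)

definition span_weight :: "nat set \<Rightarrow> real" where
  "span_weight e = real (Max e) - real (Min e)"

lemma span_weight_pair: "span_weight {u, v} = \<bar>real u - real v\<bar>"
  by (simp add: span_weight_def max_def min_def)

lemma forwarding_subgraph_bound_attained:
  assumes "1 \<le> k"
  shows "\<exists>(V :: nat set) E (w :: nat set \<Rightarrow> real) s d P F.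
            simple_graph V E \<and> two_connected V E \<and> (\<forall>e\<in>E. w e > 0) \<and>
            s \<in> V \<and> d \<in> V \<and> s \<noteq> d \<and>
            shortest_path V E w s d P \<and> path_len P = k \<and>
            forwarding_subgraph V E s d P F \<and>
            avoids_single_link_failures d P F \<and>
            finite F \<and> card F = 2 * path_len P + 1"
proof -
  define V where "V = {..Suc k}"
  define E where "E = {e. e \<subseteq> V \<and> card e = 2}"
  define P where "P = [0..<Suc k]"
  define primary where "primary = (\<lambda>i. (i, Suc i)) ` {..<k}"
  define detours where "detours = (\<lambda>i. (i, Suc k)) ` {..<k}"
  define F where "F = insert (Suc k, k) (primary \<union> detours)"
  have E_pair: "{u, v} \<in> E \<longleftrightarrow> u \<in> V \<and> v \<in> V \<and> u \<noteq> v" for u v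
    unfolding E_def by (auto simp: card_insert_if)
  have graph: "simple_graph V E" "two_connected V E"
    using assms two_connected_complete_graph[of V]
    unfolding simple_graph_def E_def V_def by auto
  have positive: "\<forall>e\<in>E. span_weight e > 0"
    unfolding E_def by (auto simp: card_2_iff span_weight_pair)
  have P_ends: "P \<noteq> []" "hd P = 0" "last P = k" "path_len P = k"
    unfolding P_def path_len_def by (simp_all del: upt_Suc)
  have arcs_P: "arcs_of P = primary" unfolding P_def primary_def by (rule arcs_of_upt)
  have path: "upath V E P"
    unfolding upath_def using arcs_P by (auto simp: P_def V_def primary_def E_pair)
  have "\<forall>(u, v) \<in> arcs_of P. span_weight {u, v} = real v - real u"
    unfolding arcs_P primary_def by (auto simp: span_weight_pair)
  then have "path_weight span_weight P = real k"
    using path_weight_eq_potential_difference[of P span_weight real] P_ends by simp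
  moreover have "real k \<le> path_weight span_weight q" if "upath V E q" "hd q = 0" "last q = k" for q
    using path_weight_ge_potential_difference[of real span_weight q] that
    by (simp add: span_weight_pair upath_def)
  ultimately have shortest: "shortest_path V E span_weight 0 k P"
    unfolding shortest_path_def using path P_ends by auto
  \<comment> \<open>\<open>k\<close> is ranked last, so every arc of \<open>F\<close> goes up in rank.\<close>
  have "acyclic F"
    by (rule acyclic_if_rank_increasing[where r = "\<lambda>v. if v = k then k + 2 else v"])
       (auto simp: F_def primary_def detours_def)
  then have fs: "forwarding_subgraph V E 0 k P F"
    unfolding forwarding_subgraph_def using path P_ends arcs_P
    by (auto simp: F_def primary_def detours_def E_pair V_def)
  have avoids: "avoids_single_link_failures k P F"
    unfolding avoids_single_link_failures_def
  proof (intro allI impI)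
    fix i assume "i < length P - 1"
    then have "i < k" "P ! i = i" "P ! (i + 1) = Suc i" by (auto simp: P_def simp del: upt_Suc)
    then show "\<exists>q. dwalk F q (P ! i) k \<and> (P ! i, P ! (i + 1)) \<notin> arcs_of q"
      by (intro exI[of _ "[i, Suc k, k]"]) (auto simp: dwalk_def arcs_of_Cons_Cons F_def detours_def)
  qed
  have "card primary = k" "card detours = k"
    unfolding primary_def detours_def by (simp_all add: card_image inj_on_def)
  moreover have "primary \<inter> detours = {}" "(Suc k, k) \<notin> primary \<union> detours"
    unfolding primary_def detours_def by auto
  ultimately have "card F = 2 * k + 1"
    unfolding F_def by (simp add: card_Un_disjoint primary_def detours_def)
  then show ?thesis
    using graph positive shortest P_ends fs avoids assms
    by (intro exI[of _ V] exI[of _ E] exI[of _ span_weight] exI[of _ 0] exI[of _ k]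
        exI[of _ P] exI[of _ F]) (auto simp: V_def F_def primary_def detours_def)
qed

lemma card_ge_if_forwarding_subgraph:
  assumes "simple_graph V E" "s \<noteq> d" "forwarding_subgraph V E s d P F"
    "avoids_single_link_failures d P F"
  shows "2 * path_len P + 1 \<le> card F"
proof (rule card_ge_if_avoids_single_link_failures)
  from assms(3) have arcs_E: "\<forall>(u, v) \<in> F. {u, v} \<in> E" and path: "upath V E P"
    and ends: "hd P = s" "last P = d"
    unfolding forwarding_subgraph_def by auto
  show "finite F" using assms(1) arcs_E by (rule finite_arcs_of_simple_graph)
  show "acyclic F" "arcs_of P \<subseteq> F" using assms(3) unfolding forwarding_subgraph_def by auto
  show "distinct P" using path by (simp add: upath_def)
  have "P \<noteq> []" using path by (simp add: upath_def)
  with ends assms(2) show "2 \<le> length P" by (cases P) (auto simp: Suc_le_eq)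
qed (use assms in \<open>simp_all add: forwarding_subgraph_def\<close>)

theorem theorem1:
  shows "(\<forall>(V :: 'a set) E (w :: 'a set \<Rightarrow> real) s d P F.
            simple_graph V E \<and> two_connected V E \<and> (\<forall>e\<in>E. w e > 0) \<and>
            s \<in> V \<and> d \<in> V \<and> s \<noteq> d \<and>
            shortest_path V E w s d P \<and> forwarding_subgraph V E s d P F \<and>
            avoids_single_link_failures d P F
            \<longrightarrow> card F \<ge> 2 * path_len P + 1)
       \<and> (\<forall>k::nat \<ge> 1. \<exists>(V :: nat set) E (w :: nat set \<Rightarrow> real) s d P F.
            simple_graph V E \<and> two_connected V E \<and> (\<forall>e\<in>E. w e > 0) \<and>
            s \<in> V \<and> d \<in> V \<and> s \<noteq> d \<and>
            shortest_path V E w s d P \<and> path_len P = k \<and>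
            forwarding_subgraph V E s d P F \<and>
            avoids_single_link_failures d P F \<and>
            finite F \<and> card F = 2 * path_len P + 1)"
proof (intro conjI allI impI)
  show "card F \<ge> 2 * path_len P + 1"
    if "simple_graph V E \<and> two_connected V E \<and> (\<forall>e\<in>E. w e > 0) \<and>
      s \<in> V \<and> d \<in> V \<and> s \<noteq> d \<and>
      shortest_path V E w s d P \<and> forwarding_subgraph V E s d P F \<and>
      avoids_single_link_failures d P F"
    for V :: "'a set" and E w s d P F
    using that card_ge_if_forwarding_subgraph[of V E s d P F] by blast
qed (rule forwarding_subgraph_bound_attained)

end
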